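(* Let $n\ge1$, $d\ge0$, and let $\mathrm{Sym}_n\subset\mathbb R^{n\times n}$ be the space of symmetric matrices. Consider undirected multigraphs with a directed output pair $H=(V,E,(a,b))$, taken up to isomorphism, with $|V|\le\min\{n,2+2d\}$, $|E|\le d$, and no isolated node in $V\setminus\{a,b\}$. For each such $H$, let $P_H:\mathrm{Sym}_n\to\mathbb R^{n\times n}$ be $P_{H'}$ restricted to $\mathrm{Sym}_n$, where $H'$ is any directed multigraph obtained by orienting each edge of $H$ (this does not depend on the orientation). Then these $P_H$ form a basis of the space of $S_n$-equivariant polynomial maps $\mathrm{Sym}_n\to\mathbb R^{n\times n}$ of degree at most $d$.
   Context: For a directed multigraph with output pair $H'=(V,E,(a,b))$ ($V=[m]$, $E$ a multiset of ordered pairs in $V\times V$ allowing loops and parallel edges, $a,b\in V$ not necessarily distinct and not in $E$), $P_{H'}(X)_{i_a,i_b}=\sum_{j\in[n]^m,\ j_a=i_a,\ j_b=i_b}\prod_{(r,s)\in E}X_{j_r,j_s}$ (with multiplicity; empty product $=1$), with all off-diagonal entries $0$ when $a=b$. An undirected multigraph with directed output pair has $E$ a multiset of unordered pairs $\{r,s\}$ (loops and parallel edges allowed) and an ordered red pair $(a,b)$; isomorphism is a node bijection preserving edge multisets and the ordered red pair. A node is isolated if no edge of $E$ is incident to it. $S_n$ acts on matrices by $(g\cdot X)_{ij}=X_{g^{-1}(i),g^{-1}(j)}$ (preserving $\mathrm{Sym}_n$); $P$ is equivariant if $P(g\cdot X)=g\cdot P(X)$ for all $g\in S_n$. *)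

theory Defs
  imports Complex_Main "HOL-Library.Multiset" "HOL-Library.Uprod" "HOL-Library.FuncSet"
    "HOL-Combinatorics.Permutations"
begin

text \<open>Matrices are functions nat => nat => real; an n x n matrix uses indices below n
  and is zero outside. Sym_n is the set of such symmetric matrices.\<close>

definition sym_mats :: "nat \<Rightarrow> (nat \<Rightarrow> nat \<Rightarrow> real) set" where
  "sym_mats n = {X. (\<forall>i j. X i j = X j i) \<and> (\<forall>i j. n \<le> i \<or> n \<le> j \<longrightarrow> X i j = 0)}"

definition perm_act :: "(nat \<Rightarrow> nat) \<Rightarrow> (nat \<Rightarrow> nat \<Rightarrow> real) \<Rightarrow> nat \<Rightarrow> nat \<Rightarrow> real" where
  "perm_act g X i j = X (inv g i) (inv g j)"

definition equivariant ::
  "nat \<Rightarrow> ((nat \<Rightarrow> nat \<Rightarrow> real) \<Rightarrow> nat \<Rightarrow> nat \<Rightarrow> real) \<Rightarrow> bool" where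
  "equivariant n P \<longleftrightarrow> (\<forall>g X i j. g permutes {0..<n} \<longrightarrow> X \<in> sym_mats n \<longrightarrow> i < n \<longrightarrow> j < n \<longrightarrow>
      P (perm_act g X) i j = perm_act g (P X) i j)"

definition poly_fun_deg :: "nat \<Rightarrow> nat \<Rightarrow> ((nat \<Rightarrow> nat \<Rightarrow> real) \<Rightarrow> real) \<Rightarrow> bool" where
  "poly_fun_deg n d f \<longleftrightarrow> (\<exists>(M :: (nat \<times> nat \<Rightarrow> nat) set) (c :: (nat \<times> nat \<Rightarrow> nat) \<Rightarrow> real).
      finite M \<and>
      (\<forall>\<alpha>\<in>M. (\<forall>p. \<alpha> p \<noteq> 0 \<longrightarrow> p \<in> {0..<n} \<times> {0..<n}) \<and>
               (\<Sum>p\<in>{0..<n} \<times> {0..<n}. \<alpha> p) \<le> d) \<and>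
      (\<forall>X\<in>sym_mats n. f X = (\<Sum>\<alpha>\<in>M. c \<alpha> * (\<Prod>p\<in>{0..<n} \<times> {0..<n}. X (fst p) (snd p) ^ \<alpha> p))))"

definition equiv_poly_map ::
  "nat \<Rightarrow> nat \<Rightarrow> ((nat \<Rightarrow> nat \<Rightarrow> real) \<Rightarrow> nat \<Rightarrow> nat \<Rightarrow> real) \<Rightarrow> bool" where
  "equiv_poly_map n d P \<longleftrightarrow> (\<forall>i<n. \<forall>j<n. poly_fun_deg n d (\<lambda>X. P X i j)) \<and> equivariant n P"

text \<open>Directed multigraph with output pair: nodes [m] = {0..<m}, edges a multiset of
  ordered pairs, output pair (a,b).\<close>
definition P_dir :: "nat \<Rightarrow> nat \<Rightarrow> (nat \<times> nat) multiset \<Rightarrow> nat \<Rightarrow> nat \<Rightarrow>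
    (nat \<Rightarrow> nat \<Rightarrow> real) \<Rightarrow> nat \<Rightarrow> nat \<Rightarrow> real" where
  "P_dir n m D a b X ia ib =
     (if a = b \<and> ia \<noteq> ib then 0 else
       (\<Sum>j\<in>{j \<in> Pi\<^sub>E {0..<m} (\<lambda>_. {0..<n}). j a = ia \<and> j b = ib}.
          prod_mset (image_mset (\<lambda>(r, s). X (j r) (j s)) D)))"

datatype ugraph = UG (nverts: nat) (uedges: "nat uprod multiset") (outa: nat) (outb: nat)

definition wf_ugraph :: "ugraph \<Rightarrow> bool" where
  "wf_ugraph H \<longleftrightarrow> (\<forall>e\<in>#uedges H. set_uprod e \<subseteq> {0..<nverts H})
      \<and> outa H < nverts H \<and> outb H < nverts H"

definition ugraph_iso :: "ugraph \<Rightarrow> ugraph \<Rightarrow> bool" where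
  "ugraph_iso H1 H2 \<longleftrightarrow> nverts H1 = nverts H2 \<and>
     (\<exists>\<sigma>. bij_betw \<sigma> {0..<nverts H1} {0..<nverts H2} \<and>
          image_mset (map_uprod \<sigma>) (uedges H1) = uedges H2 \<and>
          \<sigma> (outa H1) = outa H2 \<and> \<sigma> (outb H1) = outb H2)"

definition admissible :: "nat \<Rightarrow> nat \<Rightarrow> ugraph \<Rightarrow> bool" where
  "admissible n d H \<longleftrightarrow> wf_ugraph H \<and> nverts H \<le> min n (2 + 2 * d) \<and> size (uedges H) \<le> d \<and>
     (\<forall>v<nverts H. v \<noteq> outa H \<and> v \<noteq> outb H \<longrightarrow> (\<exists>e\<in>#uedges H. v \<in> set_uprod e))"

text \<open>An orientation of the edges (a fixed choice; the paper notes P_H does not depend on it).\<close>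
definition orient :: "nat uprod multiset \<Rightarrow> (nat \<times> nat) multiset" where
  "orient E = (SOME D. image_mset (\<lambda>(r, s). Upair r s) D = E)"

definition P_graph :: "nat \<Rightarrow> ugraph \<Rightarrow> (nat \<Rightarrow> nat \<Rightarrow> real) \<Rightarrow> nat \<Rightarrow> nat \<Rightarrow> real" where
  "P_graph n H = P_dir n (nverts H) (orient (uedges H)) (outa H) (outb H)"

text \<open>A family (F h)_{h in R} of maps is a basis of the space S of maps Sym_n -> R^{n x n},
  where maps are identified when they agree on Sym_n (entries i,j < n).\<close>
definition is_basis_of ::
  "nat \<Rightarrow> (((nat \<Rightarrow> nat \<Rightarrow> real) \<Rightarrow> nat \<Rightarrow> nat \<Rightarrow> real) \<Rightarrow> bool) \<Rightarrow> 'i set \<Rightarrow>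
   ('i \<Rightarrow> (nat \<Rightarrow> nat \<Rightarrow> real) \<Rightarrow> nat \<Rightarrow> nat \<Rightarrow> real) \<Rightarrow> bool" where
  "is_basis_of n S R F \<longleftrightarrow> finite R \<and> (\<forall>h\<in>R. S (F h)) \<and>
     (\<forall>c :: 'i \<Rightarrow> real. (\<forall>X\<in>sym_mats n. \<forall>i<n. \<forall>j<n. (\<Sum>h\<in>R. c h * F h X i j) = 0)
          \<longrightarrow> (\<forall>h\<in>R. c h = 0)) \<and>
     (\<forall>P. S P \<longrightarrow> (\<exists>c :: 'i \<Rightarrow> real. \<forall>X\<in>sym_mats n. \<forall>i<n. \<forall>j<n. P X i j = (\<Sum>h\<in>R. c h * F h X i j)))"

end

theory Submission
  imports Defs "HOL-Computational_Algebra.Polynomial"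
begin

text \<open>
  On symmetric matrices every polynomial is a combination of monomials indexed by multisets \<open>\<mu>\<close>
  of unordered index pairs, and these monomials are linearly independent (Kronecker substitution).
  Hence a polynomial map is the same as a coefficient function \<open>\<kappa> \<mu> i j\<close>, and it is equivariant
  iff \<open>\<kappa>\<close> is constant on \<open>S\<^sub>n\<close>-orbits. A triple \<open>(\<mu>, i, j)\<close> is itself a small graph with output
  pair, and its orbit is an isomorphism class of admissible graphs. The coefficient of \<open>P\<^sub>H\<close> at
  \<open>(\<mu>, i, j)\<close> counts the vertex maps sending \<open>H\<close> onto this pattern; it vanishes when the pattern
  has more vertices than \<open>H\<close>, and for equally many vertices it is nonzero only on the pattern
  isomorphic to \<open>H\<close>. This triangularity in the number of vertices gives both linear independence
  and spanning.
\<close>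

definition sym_matrix :: "(nat \<Rightarrow> nat \<Rightarrow> real) \<Rightarrow> bool" where
  "sym_matrix X \<longleftrightarrow> (\<forall>i j. X i j = X j i)"

definition sym_entry :: "(nat \<Rightarrow> nat \<Rightarrow> real) \<Rightarrow> nat uprod \<Rightarrow> real" where
  "sym_entry X e = X (Min (set_uprod e)) (Max (set_uprod e))"

definition edge_monomial :: "nat uprod multiset \<Rightarrow> (nat \<Rightarrow> nat \<Rightarrow> real) \<Rightarrow> real" where
  "edge_monomial \<mu> X = (\<Prod>e\<in>#\<mu>. sym_entry X e)"

definition pairs_below :: "nat \<Rightarrow> nat uprod set" where
  "pairs_below n = {e. set_uprod e \<subseteq> {0..<n}}"

definition monomials :: "nat \<Rightarrow> nat \<Rightarrow> nat uprod multiset set" where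
  "monomials n d = {\<mu>. set_mset \<mu> \<subseteq> pairs_below n \<and> size \<mu> \<le> d}"

lemma sym_mats_sym_matrix: "X \<in> sym_mats n \<Longrightarrow> sym_matrix X"
  by (simp add: sym_mats_def sym_matrix_def)

lemma Upair_commute: "Upair i j = Upair j i"
  by auto

lemma sym_entry_Upair: "sym_matrix X \<Longrightarrow> sym_entry X (Upair i j) = X i j"
  unfolding sym_entry_def sym_matrix_def by (cases "i \<le> j") (auto simp: min_def max_def)

lemma edge_monomial_empty [simp]: "edge_monomial {#} X = 1"
  by (simp add: edge_monomial_def)

lemma edge_monomial_add_mset [simp]:
  "edge_monomial (add_mset e \<mu>) X = sym_entry X e * edge_monomial \<mu> X"
  by (simp add: edge_monomial_def)

lemma edge_monomial_Upair_image:
  assumes "sym_matrix X"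
  shows "edge_monomial (image_mset (\<lambda>(r, s). Upair r s) D) X = (\<Prod>(r, s)\<in>#D. X r s)"
  by (induction D) (auto simp: sym_entry_Upair[OF assms])

lemma pairs_below_eq: "pairs_below n = (\<lambda>(i, j). Upair i j) ` ({0..<n} \<times> {0..<n})"
proof -
  have "e \<in> (\<lambda>(i, j). Upair i j) ` ({0..<n} \<times> {0..<n})" if "e \<in> pairs_below n" for e
    using that by (cases e) (auto simp: pairs_below_def)
  then show ?thesis by (auto simp: pairs_below_def)
qed

lemma finite_pairs_below: "finite (pairs_below n)"
  by (simp add: pairs_below_eq)

lemma finite_monomials: "finite (monomials n d)"
proof -
  have "monomials n d = (\<Union>s\<in>{0..d}. multisets_of_size (pairs_below n) s)"
    by (auto simp: monomials_def multisets_of_size_def)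
  then show ?thesis by (simp add: finite_pairs_below finite_multisets_of_size)
qed

lemma nat_digits_unique:
  fixes f g :: "nat \<Rightarrow> nat"
  assumes "\<forall>k<K. f k < B" "\<forall>k<K. g k < B" "(\<Sum>k<K. f k * B ^ k) = (\<Sum>k<K. g k * B ^ k)"
  shows "\<forall>k<K. f k = g k"
  using assms
proof (induction K arbitrary: f g)
  case (Suc K)
  have split: "(\<Sum>k<Suc K. h k * B ^ k) = h 0 + B * (\<Sum>k<K. h (Suc k) * B ^ k)" for h :: "nat \<Rightarrow> nat"
    by (subst sum.lessThan_Suc_shift) (simp add: sum_distrib_left ac_simps)
  have eq: "f 0 + B * (\<Sum>k<K. f (Suc k) * B ^ k) = g 0 + B * (\<Sum>k<K. g (Suc k) * B ^ k)"
    using Suc.prems(3) unfolding split .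
  have digit0: "f 0 < B" "g 0 < B"
    using Suc.prems by auto
  then have "f 0 = g 0"
    using arg_cong[OF eq, of "\<lambda>x. x mod B"] by simp
  moreover have "\<forall>k<K. f (Suc k) = g (Suc k)"
  proof (rule Suc.IH)
    show "(\<Sum>k<K. f (Suc k) * B ^ k) = (\<Sum>k<K. g (Suc k) * B ^ k)"
      using eq \<open>f 0 = g 0\<close> digit0 by simp
  qed (use Suc.prems in auto)
  ultimately show ?case
    by (auto simp: less_Suc_eq_0_disj)
qed simp

lemma prod_mset_over_superset:
  assumes "finite A" "set_mset M \<subseteq> A"
  shows "(\<Prod>x\<in>#M. f x) = (\<Prod>x\<in>A. f x ^ count M x)"
proof -
  have "(\<Prod>x\<in>#M. f x) = (\<Prod>x\<in>set_mset M. f x ^ count M x)"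
    by (rule image_prod_mset_multiplicity)
  also have "\<dots> = (\<Prod>x\<in>A. f x ^ count M x)"
    using assms by (intro prod.mono_neutral_left) (auto simp: not_in_iff)
  finally show ?thesis .
qed

lemma digit_encoding_inj_on_monomials:
  assumes h: "bij_betw h {..<K} (pairs_below n)" and "d < B"
  shows "inj_on (\<lambda>\<mu>. \<Sum>k<K. count \<mu> (h k) * B ^ k) (monomials n d)"
proof (rule inj_onI, rule multiset_eqI)
  fix \<mu> \<nu> e
  assume \<mu>: "\<mu> \<in> monomials n d" and \<nu>: "\<nu> \<in> monomials n d"
    and digits: "(\<Sum>k<K. count \<mu> (h k) * B ^ k) = (\<Sum>k<K. count \<nu> (h k) * B ^ k)"
  show "count \<mu> e = count \<nu> e"
  proof (cases "e \<in> pairs_below n")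
    case True
    then obtain k where "k < K" "e = h k"
      using h by (auto simp: bij_betw_def)
    moreover have "count \<sigma> x < B" if "\<sigma> \<in> monomials n d" for \<sigma> x
      using count_le_size[of \<sigma> x] that \<open>d < B\<close> by (simp add: monomials_def)
    ultimately show ?thesis
      using nat_digits_unique[of K "\<lambda>k. count \<mu> (h k)" B "\<lambda>k. count \<nu> (h k)"] \<mu> \<nu> digits by blast
  next
    case False
    then have "e \<notin># \<mu>" "e \<notin># \<nu>"
      using \<mu> \<nu> by (auto simp: monomials_def)
    then show ?thesis by (simp add: not_in_iff)
  qed
qed

text \<open>Kronecker substitution: putting \<open>x ^ B ^ k\<close> at the \<open>k\<close>-th pair, with \<open>B > d\<close>,
  turns distinct monomials of degree at most \<open>d\<close> into distinct powers of \<open>x\<close>.\<close>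

lemma edge_monomials_independent:
  assumes zero: "\<forall>X\<in>sym_mats n. (\<Sum>\<mu>\<in>monomials n d. c \<mu> * edge_monomial \<mu> X) = 0"
    and \<mu>0: "\<mu>0 \<in> monomials n d"
  shows "c \<mu>0 = 0"
proof -
  define K where "K = card (pairs_below n)"
  obtain h where h: "bij_betw h {..<K} (pairs_below n)"
    using ex_bij_betw_nat_finite[OF finite_pairs_below] unfolding K_def atLeast0LessThan by blast
  define B where "B = Suc d"
  define w where "w e = B ^ inv_into {..<K} h e" for e
  define W where "W \<mu> = (\<Sum>k<K. count \<mu> (h k) * B ^ k)" for \<mu>
  define Xs where "Xs x i j = (if i < n \<and> j < n then (x::real) ^ w (Upair i j) else 0)" for x i j
  have Xs_sym: "Xs x \<in> sym_mats n" for x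
    unfolding sym_mats_def Xs_def by (auto simp: Upair_commute)
  have Xs_entry: "sym_entry (Xs x) e = x ^ w e" if "e \<in> pairs_below n" for x e
    using that sym_entry_Upair[OF sym_mats_sym_matrix[OF Xs_sym]]
    by (cases e) (auto simp: Xs_def pairs_below_def)
  have Xs_monomial: "edge_monomial \<mu> (Xs x) = x ^ W \<mu>" if "\<mu> \<in> monomials n d" for \<mu> x
  proof -
    have "edge_monomial \<mu> (Xs x) = (\<Prod>e\<in>pairs_below n. (x ^ w e) ^ count \<mu> e)"
      unfolding edge_monomial_def using that
      by (subst prod_mset_over_superset[OF finite_pairs_below])
        (auto simp: monomials_def Xs_entry intro!: prod.cong)
    also have "\<dots> = (\<Prod>k<K. x ^ (count \<mu> (h k) * B ^ k))"
      using prod.reindex_bij_betw[OF h, of "\<lambda>e. (x ^ w e) ^ count \<mu> e"] bij_betw_inv_into_left[OF h]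
      by (auto simp: w_def power_mult[symmetric] mult.commute intro!: prod.cong)
    finally show ?thesis by (simp add: W_def power_sum)
  qed
  have W_inj: "\<mu> = \<nu>" if "\<mu> \<in> monomials n d" "\<nu> \<in> monomials n d" "W \<mu> = W \<nu>" for \<mu> \<nu>
    using inj_onD[OF digit_encoding_inj_on_monomials[OF h, of d B]] that by (simp add: W_def B_def)
  define p where "p = (\<Sum>\<mu>\<in>monomials n d. monom (c \<mu>) (W \<mu>))"
  have "poly p x = 0" for x
  proof -
    have "poly p x = (\<Sum>\<mu>\<in>monomials n d. c \<mu> * edge_monomial \<mu> (Xs x))"
      by (simp add: p_def poly_sum poly_monom Xs_monomial)
    then show ?thesis
      using zero Xs_sym by simp
  qed
  then have "p = 0"
    using poly_all_0_iff_0 by blast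
  moreover have "coeff p (W \<mu>0) = c \<mu>0"
  proof -
    have "coeff p (W \<mu>0) = (\<Sum>\<mu>\<in>monomials n d. if \<mu> = \<mu>0 then c \<mu> else 0)"
      unfolding p_def coeff_sum coeff_monom using W_inj \<mu>0 by (intro sum.cong) auto
    then show ?thesis
      using \<mu>0 finite_monomials by simp
  qed
  ultimately show ?thesis by simp
qed

lemma image_mset_orient: "image_mset (\<lambda>(r, s). Upair r s) (orient E) = E"
proof -
  have "\<exists>D. image_mset (\<lambda>(r, s). Upair r s) D = E"
  proof (induction E)
    case (add e E)
    then obtain D where "image_mset (\<lambda>(r, s). Upair r s) D = E" ..
    moreover obtain r s where "e = Upair r s" by (cases e)
    ultimately show ?case by (intro exI[of _ "add_mset (r, s) D"]) simp
  qed simp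
  then show ?thesis unfolding orient_def by (rule someI_ex)
qed

lemma sum_regroup:
  fixes c :: "'a \<Rightarrow> 'c::comm_semiring_0" and F :: "'b \<Rightarrow> 'c"
  assumes "finite A" "finite B" "h ` A \<subseteq> B"
  shows "(\<Sum>x\<in>A. c x * F (h x)) = (\<Sum>y\<in>B. (\<Sum>x\<in>{x\<in>A. h x = y}. c x) * F y)"
proof -
  have "(\<Sum>x\<in>{x\<in>A. h x = y}. c x * F (h x)) = (\<Sum>x\<in>{x\<in>A. h x = y}. c x) * F y" for y
    unfolding sum_distrib_right by (rule sum.cong) auto
  then show ?thesis
    using sum.group[OF assms, of "\<lambda>x. c x * F (h x)"] by simp
qed

lemma size_mset_over_superset:
  assumes "finite A" "set_mset M \<subseteq> A"
  shows "size M = (\<Sum>x\<in>A. count M x)"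
  unfolding size_multiset_overloaded_eq
  using assms by (intro sum.mono_neutral_left) (auto simp: not_in_iff)

lemma prod_mset_pairs_eq_power_product:
  fixes n :: nat and X :: "nat \<Rightarrow> nat \<Rightarrow> 'a::comm_monoid_mult"
  assumes "set_mset D \<subseteq> {0..<n} \<times> {0..<n}"
  shows "(\<Prod>(r, s)\<in>#D. X r s) = (\<Prod>p\<in>{0..<n} \<times> {0..<n}. X (fst p) (snd p) ^ count D p)"
  by (subst prod_mset_over_superset[OF _ assms]) (auto simp: split_beta)

lemma poly_fun_deg_imp_edge_monomials:
  assumes "poly_fun_deg n d f"
  obtains c where "\<forall>X\<in>sym_mats n. f X = (\<Sum>\<mu>\<in>monomials n d. c \<mu> * edge_monomial \<mu> X)"
proof -
  let ?sq = "{0..<n} \<times> {0..<n}" and ?U = "image_mset (\<lambda>(r, s). Upair r s)"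
  obtain M c where M: "finite M"
    and exps: "\<forall>\<alpha>\<in>M. (\<forall>p. \<alpha> p \<noteq> 0 \<longrightarrow> p \<in> ?sq) \<and> (\<Sum>p\<in>?sq. \<alpha> p) \<le> d"
    and f: "\<forall>X\<in>sym_mats n. f X = (\<Sum>\<alpha>\<in>M. c \<alpha> * (\<Prod>p\<in>?sq. X (fst p) (snd p) ^ \<alpha> p))"
    using assms unfolding poly_fun_deg_def by blast
  define mon where "mon \<alpha> = ?U (Abs_multiset \<alpha>)" for \<alpha> :: "nat \<times> nat \<Rightarrow> nat"
  have count_mon: "count (Abs_multiset \<alpha>) = \<alpha>" and set_mon: "set_mset (Abs_multiset \<alpha>) \<subseteq> ?sq"
    if "\<alpha> \<in> M" for \<alpha>
  proof -
    have \<alpha>_sq: "\<alpha> p \<noteq> 0 \<Longrightarrow> p \<in> ?sq" for p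
      using exps that by blast
    have "finite {p. 0 < \<alpha> p}"
      by (rule finite_subset[of _ ?sq]) (use \<alpha>_sq in auto)
    then show "count (Abs_multiset \<alpha>) = \<alpha>" by (rule count_Abs_multiset)
    then show "set_mset (Abs_multiset \<alpha>) \<subseteq> ?sq"
      using \<alpha>_sq by (auto simp: set_mset_def)
  qed
  have "mon \<alpha> \<in> monomials n d" if "\<alpha> \<in> M" for \<alpha>
  proof -
    have "size (mon \<alpha>) = (\<Sum>p\<in>?sq. \<alpha> p)"
      using size_mset_over_superset[OF _ set_mon[OF that]] count_mon[OF that] by (simp add: mon_def)
    then show ?thesis
      using exps that set_mon[OF that] by (force simp: monomials_def mon_def pairs_below_def)
  qed
  then have mon_M: "mon ` M \<subseteq> monomials n d" by blast
  have "edge_monomial (mon \<alpha>) X = (\<Prod>p\<in>?sq. X (fst p) (snd p) ^ \<alpha> p)"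
    if "\<alpha> \<in> M" "X \<in> sym_mats n" for \<alpha> X
    using edge_monomial_Upair_image[OF sym_mats_sym_matrix[OF that(2)]]
      prod_mset_pairs_eq_power_product[OF set_mon[OF that(1)]] count_mon[OF that(1)]
    by (simp add: mon_def)
  then have "f X = (\<Sum>\<alpha>\<in>M. c \<alpha> * edge_monomial (mon \<alpha>) X)" if "X \<in> sym_mats n" for X
    using f that by simp
  moreover have "(\<Sum>\<alpha>\<in>M. c \<alpha> * edge_monomial (mon \<alpha>) X) =
      (\<Sum>\<mu>\<in>monomials n d. (\<Sum>\<alpha>\<in>{\<alpha>\<in>M. mon \<alpha> = \<mu>}. c \<alpha>) * edge_monomial \<mu> X)" for X
    by (rule sum_regroup[OF M finite_monomials mon_M])
  ultimately show ?thesis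
    by (intro that[of "\<lambda>\<mu>. \<Sum>\<alpha>\<in>{\<alpha>\<in>M. mon \<alpha> = \<mu>}. c \<alpha>"]) auto
qed

lemma edge_monomials_imp_poly_fun_deg:
  assumes f: "\<forall>X\<in>sym_mats n. f X = (\<Sum>\<mu>\<in>monomials n d. c \<mu> * edge_monomial \<mu> X)"
  shows "poly_fun_deg n d f"
proof -
  let ?sq = "{0..<n} \<times> {0..<n}"
  define exps where "exps \<mu> = count (orient \<mu>)" for \<mu>
  have set_orient: "set_mset (orient \<mu>) \<subseteq> ?sq" if "\<mu> \<in> monomials n d" for \<mu>
  proof
    fix p assume "p \<in># orient \<mu>"
    then have "(\<lambda>(r, s). Upair r s) p \<in># \<mu>"
      using image_mset_orient[of \<mu>] by (metis image_eqI set_image_mset)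
    then show "p \<in> ?sq"
      using that by (auto simp: monomials_def pairs_below_def split: prod.splits)
  qed
  have exps_ok: "\<forall>\<alpha>\<in>exps ` monomials n d. (\<forall>p. \<alpha> p \<noteq> 0 \<longrightarrow> p \<in> ?sq) \<and> (\<Sum>p\<in>?sq. \<alpha> p) \<le> d"
  proof
    fix \<alpha> assume "\<alpha> \<in> exps ` monomials n d"
    then obtain \<mu> where \<mu>: "\<mu> \<in> monomials n d" "\<alpha> = exps \<mu>" by blast
    have "(\<Sum>p\<in>?sq. \<alpha> p) = size \<mu>"
      using size_mset_over_superset[OF _ set_orient[OF \<mu>(1)]]
        arg_cong[OF image_mset_orient[of \<mu>], of size]
      by (simp add: \<mu>(2) exps_def)
    then show "(\<forall>p. \<alpha> p \<noteq> 0 \<longrightarrow> p \<in> ?sq) \<and> (\<Sum>p\<in>?sq. \<alpha> p) \<le> d"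
      using \<mu> set_orient[OF \<mu>(1)] by (auto simp: exps_def monomials_def count_eq_zero_iff)
  qed
  define cc where "cc \<alpha> = (\<Sum>\<mu>\<in>{\<mu>\<in>monomials n d. exps \<mu> = \<alpha>}. c \<mu>)" for \<alpha>
  have "f X = (\<Sum>\<alpha>\<in>exps ` monomials n d. cc \<alpha> * (\<Prod>p\<in>?sq. X (fst p) (snd p) ^ \<alpha> p))"
    if X: "X \<in> sym_mats n" for X
  proof -
    have "edge_monomial \<mu> X = (\<Prod>p\<in>?sq. X (fst p) (snd p) ^ exps \<mu> p)" if "\<mu> \<in> monomials n d" for \<mu>
      using edge_monomial_Upair_image[OF sym_mats_sym_matrix[OF X], of "orient \<mu>"]
        prod_mset_pairs_eq_power_product[OF set_orient[OF that]]
      by (simp add: image_mset_orient exps_def)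
    then have "f X = (\<Sum>\<mu>\<in>monomials n d. c \<mu> * (\<Prod>p\<in>?sq. X (fst p) (snd p) ^ exps \<mu> p))"
      using f X by simp
    also have "\<dots> = (\<Sum>\<alpha>\<in>exps ` monomials n d. cc \<alpha> * (\<Prod>p\<in>?sq. X (fst p) (snd p) ^ \<alpha> p))"
      unfolding cc_def
      by (rule sum_regroup[OF finite_monomials finite_imageI[OF finite_monomials] subset_refl])
    finally show ?thesis .
  qed
  then show ?thesis
    unfolding poly_fun_deg_def using exps_ok finite_monomials
    by (intro exI[of _ "exps ` monomials n d"] exI[of _ cc]) simp
qed

definition poly_map :: "nat \<Rightarrow> nat \<Rightarrow> (nat uprod multiset \<Rightarrow> nat \<Rightarrow> nat \<Rightarrow> real) \<Rightarrow>
    (nat \<Rightarrow> nat \<Rightarrow> real) \<Rightarrow> nat \<Rightarrow> nat \<Rightarrow> real" where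
  "poly_map n d \<kappa> X i j = (\<Sum>\<mu>\<in>monomials n d. \<kappa> \<mu> i j * edge_monomial \<mu> X)"

lemma poly_map_coeff_unique:
  assumes "\<forall>X\<in>sym_mats n. poly_map n d \<kappa> X i j = poly_map n d \<kappa>' X i' j'" "\<mu> \<in> monomials n d"
  shows "\<kappa> \<mu> i j = \<kappa>' \<mu> i' j'"
proof -
  have "\<forall>X\<in>sym_mats n. (\<Sum>\<nu>\<in>monomials n d. (\<kappa> \<nu> i j - \<kappa>' \<nu> i' j') * edge_monomial \<nu> X) = 0"
    using assms(1) by (simp add: poly_map_def left_diff_distrib sum_subtractf)
  from edge_monomials_independent[OF this assms(2)] show ?thesis by simp
qed

lemma poly_map_sum:
  "poly_map n d (\<lambda>\<mu> i j. \<Sum>h\<in>A. c h * \<kappa> h \<mu> i j) X i j = (\<Sum>h\<in>A. c h * poly_map n d (\<kappa> h) X i j)"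
  unfolding poly_map_def sum_distrib_right sum_distrib_left
  by (subst sum.swap) (simp add: mult.assoc)

abbreviation map_edges :: "(nat \<Rightarrow> nat) \<Rightarrow> nat uprod multiset \<Rightarrow> nat uprod multiset" where
  "map_edges g \<mu> \<equiv> image_mset (map_uprod g) \<mu>"

lemma map_edges_comp: "map_edges g (map_edges h \<mu>) = map_edges (g \<circ> h) \<mu>"
  by (simp add: image_mset.compositionality o_def uprod.map_comp)

lemma map_edges_cong:
  "(\<And>e x. e \<in># \<mu> \<Longrightarrow> x \<in> set_uprod e \<Longrightarrow> g x = h x) \<Longrightarrow> map_edges g \<mu> = map_edges h \<mu>"
  by (intro image_mset_cong uprod.map_cong0) auto

lemma map_edges_permutes_inverse:
  assumes "g permutes S"
  shows "map_edges g (map_edges (inv g) \<mu>) = \<mu>" "map_edges (inv g) (map_edges g \<mu>) = \<mu>"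
  by (simp_all add: map_edges_comp permutes_inv_o[OF assms] uprod.map_id0)

lemma map_edges_monomials:
  assumes "g permutes {0..<n}" "\<mu> \<in> monomials n d"
  shows "map_edges g \<mu> \<in> monomials n d"
proof -
  have "g ` {0..<n} \<subseteq> {0..<n}"
    using permutes_image[OF assms(1)] by simp
  then show ?thesis
    using assms(2) by (fastforce simp: monomials_def pairs_below_def uprod.set_map)
qed

lemma bij_betw_map_edges_monomials:
  assumes "g permutes {0..<n}"
  shows "bij_betw (map_edges g) (monomials n d) (monomials n d)"
  by (rule bij_betw_byWitness[where f' = "map_edges (inv g)"])
    (auto simp: map_edges_permutes_inverse[OF assms] map_edges_monomials[OF assms]
      map_edges_monomials[OF permutes_inv[OF assms]])

lemma edge_monomial_perm_act:
  assumes "sym_matrix X"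
  shows "edge_monomial \<mu> (perm_act g X) = edge_monomial (map_edges (inv g) \<mu>) X"
proof -
  have "sym_entry (perm_act g X) e = sym_entry X (map_uprod (inv g) e)" for e
    using assms by (cases e) (simp add: sym_entry_Upair sym_matrix_def perm_act_def)
  then show ?thesis
    by (simp add: edge_monomial_def multiset.map_comp comp_def)
qed

lemma poly_map_perm_act:
  assumes "g permutes {0..<n}" "sym_matrix X"
  shows "poly_map n d \<kappa> (perm_act g X) i j = poly_map n d (\<lambda>\<nu>. \<kappa> (map_edges g \<nu>)) X i j"
proof -
  have "poly_map n d \<kappa> (perm_act g X) i j =
      (\<Sum>\<mu>\<in>monomials n d. \<kappa> (map_edges g (map_edges (inv g) \<mu>)) i j *
        edge_monomial (map_edges (inv g) \<mu>) X)"
    by (simp add: poly_map_def edge_monomial_perm_act[OF assms(2)]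
        map_edges_permutes_inverse[OF assms(1)])
  also have "\<dots> = poly_map n d (\<lambda>\<nu>. \<kappa> (map_edges g \<nu>)) X i j"
    unfolding poly_map_def
    by (rule sum.reindex_bij_betw[OF bij_betw_map_edges_monomials[OF permutes_inv[OF assms(1)]]])
  finally show ?thesis .
qed

definition invariant_coeffs :: "nat \<Rightarrow> nat \<Rightarrow> (nat uprod multiset \<Rightarrow> nat \<Rightarrow> nat \<Rightarrow> real) \<Rightarrow> bool" where
  "invariant_coeffs n d \<kappa> \<longleftrightarrow> (\<forall>g. g permutes {0..<n} \<longrightarrow>
      (\<forall>\<mu>\<in>monomials n d. \<forall>i<n. \<forall>j<n. \<kappa> (map_edges g \<mu>) (g i) (g j) = \<kappa> \<mu> i j))"

lemma perm_act_sym_mats: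
  assumes "g permutes {0..<n}" "X \<in> sym_mats n"
  shows "perm_act g X \<in> sym_mats n"
proof -
  have "inv g i = i" if "n \<le> i" for i
    using permutes_not_in[OF permutes_inv[OF assms(1)]] that by simp
  then show ?thesis
    using assms(2) unfolding sym_mats_def perm_act_def by auto
qed

lemma permutes_lessThan:
  fixes n :: nat
  assumes "g permutes {0..<n}" "i < n"
  shows "g i < n"
proof -
  have "g i \<in> {0..<n}"
    using permutes_in_image[OF assms(1)] assms(2) by simp
  then show ?thesis by simp
qed

lemma equivariant_cong:
  assumes PQ: "\<forall>X\<in>sym_mats n. \<forall>i<n. \<forall>j<n. P X i j = Q X i j"
  shows "equivariant n P \<longleftrightarrow> equivariant n Q"
proof -
  have "P (perm_act g X) i j = perm_act g (P X) i j \<longleftrightarrow> Q (perm_act g X) i j = perm_act g (Q X) i j"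
    if "g permutes {0..<n}" "X \<in> sym_mats n" "i < n" "j < n" for g X i j
  proof -
    have "inv g i < n" "inv g j < n"
      using permutes_lessThan[OF permutes_inv[OF that(1)]] that(3,4) by auto
    then show ?thesis
      using PQ perm_act_sym_mats[OF that(1,2)] that by (simp add: perm_act_def)
  qed
  then show ?thesis
    unfolding equivariant_def by blast
qed

lemma equivariant_poly_map_iff:
  "equivariant n (poly_map n d \<kappa>) \<longleftrightarrow> invariant_coeffs n d \<kappa>"
proof
  assume eq: "equivariant n (poly_map n d \<kappa>)"
  show "invariant_coeffs n d \<kappa>"
    unfolding invariant_coeffs_def
  proof (intro allI impI ballI)
    fix g \<mu> i j assume g: "g permutes {0..<n}" and \<mu>: "\<mu> \<in> monomials n d" and ij: "i < n" "j < n"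
    have "poly_map n d (\<lambda>\<nu>. \<kappa> (map_edges g \<nu>)) X (g i) (g j) = poly_map n d \<kappa> X i j"
      if X: "X \<in> sym_mats n" for X
      using eq g X permutes_lessThan[OF g] ij
      unfolding equivariant_def poly_map_perm_act[OF g sym_mats_sym_matrix[OF X], symmetric]
      by (simp add: perm_act_def permutes_inverses[OF g])
    then show "\<kappa> (map_edges g \<mu>) (g i) (g j) = \<kappa> \<mu> i j"
      using poly_map_coeff_unique[OF _ \<mu>] by blast
  qed
next
  assume inv: "invariant_coeffs n d \<kappa>"
  show "equivariant n (poly_map n d \<kappa>)"
    unfolding equivariant_def
  proof (intro allI impI)
    fix g X i j assume g: "g permutes {0..<n}" and X: "X \<in> sym_mats n" and ij: "i < n" "j < n"
    have "\<kappa> (map_edges g \<nu>) i j = \<kappa> \<nu> (inv g i) (inv g j)" if "\<nu> \<in> monomials n d" for \<nu>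
      using inv g that permutes_lessThan[OF permutes_inv[OF g]] ij
      unfolding invariant_coeffs_def by (metis permutes_inverses(1)[OF g])
    then have "poly_map n d (\<lambda>\<nu>. \<kappa> (map_edges g \<nu>)) X i j = poly_map n d \<kappa> X (inv g i) (inv g j)"
      unfolding poly_map_def by (intro sum.cong) auto
    then show "poly_map n d \<kappa> (perm_act g X) i j = perm_act g (poly_map n d \<kappa> X) i j"
      by (simp add: poly_map_perm_act[OF g sym_mats_sym_matrix[OF X]] perm_act_def)
  qed
qed

definition graph_maps :: "nat \<Rightarrow> ugraph \<Rightarrow> nat \<Rightarrow> nat \<Rightarrow> (nat \<Rightarrow> nat) set" where
  "graph_maps n H i j = {\<phi> \<in> {0..<nverts H} \<rightarrow>\<^sub>E {0..<n}. \<phi> (outa H) = i \<and> \<phi> (outb H) = j}"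

definition graph_coeff :: "nat \<Rightarrow> ugraph \<Rightarrow> nat uprod multiset \<Rightarrow> nat \<Rightarrow> nat \<Rightarrow> real" where
  "graph_coeff n H \<mu> i j = real (card {\<phi> \<in> graph_maps n H i j. map_edges \<phi> (uedges H) = \<mu>})"

lemma wf_ugraph_edge_vertex:
  "wf_ugraph H \<Longrightarrow> e \<in># uedges H \<Longrightarrow> x \<in> set_uprod e \<Longrightarrow> x < nverts H"
  unfolding wf_ugraph_def by fastforce

lemma finite_graph_maps: "finite (graph_maps n H i j)"
  unfolding graph_maps_def
  by (rule finite_subset[OF _ finite_PiE[of "{0..<nverts H}" "\<lambda>_. {0..<n}"]]) auto

lemma map_edges_graph_maps_monomials:
  assumes "wf_ugraph H" "size (uedges H) \<le> d" "\<phi> \<in> graph_maps n H i j"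
  shows "map_edges \<phi> (uedges H) \<in> monomials n d"
proof -
  have "set_uprod (map_uprod \<phi> e) \<subseteq> {0..<n}" if "e \<in># uedges H" for e
    using assms(1,3) that by (fastforce simp: wf_ugraph_def graph_maps_def uprod.set_map PiE_iff)
  then show ?thesis
    using assms(2) by (auto simp: monomials_def pairs_below_def)
qed

lemma edge_monomial_map_edges_orient:
  assumes "sym_matrix X"
  shows "edge_monomial (map_edges \<phi> E) X = (\<Prod>(r, s)\<in>#orient E. X (\<phi> r) (\<phi> s))"
proof -
  have "map_edges \<phi> E = image_mset (\<lambda>(r, s). Upair r s) (image_mset (map_prod \<phi> \<phi>) (orient E))"
    by (subst (1) image_mset_orient[of E, symmetric])
      (simp add: image_mset.compositionality o_def case_prod_beta)
  then have "edge_monomial (map_edges \<phi> E) X =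
      (\<Prod>(r, s)\<in>#image_mset (map_prod \<phi> \<phi>) (orient E). X r s)"
    by (simp only: edge_monomial_Upair_image[OF assms])
  then show ?thesis
    by (simp add: image_mset.compositionality o_def case_prod_beta split_beta')
qed

lemma P_graph_eq_poly_map:
  assumes "wf_ugraph H" "size (uedges H) \<le> d" "X \<in> sym_mats n"
  shows "P_graph n H X i j = poly_map n d (graph_coeff n H) X i j"
proof -
  have "P_graph n H X i j = (\<Sum>\<phi>\<in>graph_maps n H i j. 1 * edge_monomial (map_edges \<phi> (uedges H)) X)"
  proof (cases "outa H = outb H \<and> i \<noteq> j")
    case True
    then have "graph_maps n H i j = {}" by (auto simp: graph_maps_def)
    then show ?thesis using True by (simp add: P_graph_def P_dir_def)
  next
    case False
    show ?thesis
      unfolding P_graph_def P_dir_def graph_maps_def if_not_P[OF False]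
      by (simp add: edge_monomial_map_edges_orient[OF sym_mats_sym_matrix[OF assms(3)]])
  qed
  also have "\<dots> = poly_map n d (graph_coeff n H) X i j"
    unfolding poly_map_def graph_coeff_def
    using map_edges_graph_maps_monomials[OF assms(1,2)]
    by (subst sum_regroup[OF finite_graph_maps finite_monomials]) auto
  finally show ?thesis .
qed

lemma graph_coeff_invariant:
  assumes "wf_ugraph H"
  shows "invariant_coeffs n d (graph_coeff n H)"
  unfolding invariant_coeffs_def
proof (intro allI impI ballI)
  fix g \<mu> i j assume g: "g permutes {0..<n}" and ij: "i < n" "j < n"
  let ?V = "{0..<nverts H}" and ?E = "uedges H"
  define A where "A = {\<phi> \<in> graph_maps n H i j. map_edges \<phi> ?E = \<mu>}"
  define B where "B = {\<phi> \<in> graph_maps n H (g i) (g j). map_edges \<phi> ?E = map_edges g \<mu>}"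
  have outs: "outa H \<in> ?V" "outb H \<in> ?V"
    using assms by (auto simp: wf_ugraph_def)
  have map_edges_restrict: "map_edges (restrict (f \<circ> \<phi>) ?V) ?E = map_edges f (map_edges \<phi> ?E)"
    for f \<phi>
    unfolding map_edges_comp by (rule map_edges_cong) (auto dest: wf_ugraph_edge_vertex[OF assms])
  have "bij_betw (\<lambda>\<phi>. restrict (g \<circ> \<phi>) ?V) A B"
  proof (rule bij_betw_byWitness[where f' = "\<lambda>\<phi>. restrict (inv g \<circ> \<phi>) ?V"])
    show "\<forall>\<phi>\<in>A. restrict (inv g \<circ> restrict (g \<circ> \<phi>) ?V) ?V = \<phi>"
      by (auto simp: A_def graph_maps_def permutes_inverses[OF g] fun_eq_iff PiE_iff extensional_def)
    show "\<forall>\<phi>\<in>B. restrict (g \<circ> restrict (inv g \<circ> \<phi>) ?V) ?V = \<phi>"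
      by (auto simp: B_def graph_maps_def permutes_inverses[OF g] fun_eq_iff PiE_iff extensional_def)
    show "(\<lambda>\<phi>. restrict (g \<circ> \<phi>) ?V) ` A \<subseteq> B"
      using outs permutes_lessThan[OF g]
      by (auto simp: A_def B_def graph_maps_def PiE_iff map_edges_restrict)
    show "(\<lambda>\<phi>. restrict (inv g \<circ> \<phi>) ?V) ` B \<subseteq> A"
      using outs permutes_lessThan[OF permutes_inv[OF g]]
      by (auto simp: A_def B_def graph_maps_def PiE_iff map_edges_restrict
          map_edges_permutes_inverse[OF g] permutes_inverses[OF g])
  qed
  then show "graph_coeff n H (map_edges g \<mu>) (g i) (g j) = graph_coeff n H \<mu> i j"
    unfolding graph_coeff_def A_def B_def by (simp add: bij_betw_same_card)
qed

lemma P_graph_equiv_poly_map: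
  assumes "wf_ugraph H" "size (uedges H) \<le> d"
  shows "equiv_poly_map n d (P_graph n H)"
  unfolding equiv_poly_map_def
proof (intro conjI allI impI)
  fix i j
  show "poly_fun_deg n d (\<lambda>X. P_graph n H X i j)"
    by (rule edge_monomials_imp_poly_fun_deg[where c = "\<lambda>\<mu>. graph_coeff n H \<mu> i j"])
      (simp add: P_graph_eq_poly_map[OF assms] poly_map_def)
next
  have "equivariant n (poly_map n d (graph_coeff n H))"
    using graph_coeff_invariant[OF assms(1)] equivariant_poly_map_iff by blast
  then show "equivariant n (P_graph n H)"
    using equivariant_cong P_graph_eq_poly_map[OF assms] by blast
qed

definition pattern_verts :: "nat uprod multiset \<Rightarrow> nat \<Rightarrow> nat \<Rightarrow> nat set" where
  "pattern_verts \<mu> i j = insert i (insert j (\<Union>e\<in>set_mset \<mu>. set_uprod e))"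

lemma finite_pattern_verts: "finite (pattern_verts \<mu> i j)"
  by (simp add: pattern_verts_def)

lemma pattern_verts_subset:
  "\<mu> \<in> monomials n d \<Longrightarrow> i < n \<Longrightarrow> j < n \<Longrightarrow> pattern_verts \<mu> i j \<subseteq> {0..<n}"
  by (auto simp: pattern_verts_def monomials_def pairs_below_def)

lemma card_pattern_verts_le: "card (pattern_verts \<mu> i j) \<le> 2 + 2 * size \<mu>"
proof -
  have "card (\<Union>e\<in>set_mset \<mu>. set_uprod e) \<le> 2 * size \<mu>"
  proof (induction \<mu>)
    case (add e \<mu>)
    have "card (set_uprod e) \<le> 2" by (cases e) (simp add: card_insert_if)
    then show ?case
      using add card_Un_le[of "set_uprod e" "\<Union>e\<in>set_mset \<mu>. set_uprod e"] by simp
  qed simp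
  moreover have "finite (\<Union>e\<in>set_mset \<mu>. set_uprod e)" by simp
  ultimately show ?thesis
    unfolding pattern_verts_def by (auto simp: card_insert_if)
qed

lemma pattern_verts_map_edges:
  assumes "admissible n d H"
  shows "pattern_verts (map_edges \<phi> (uedges H)) (\<phi> (outa H)) (\<phi> (outb H)) = \<phi> ` {0..<nverts H}"
proof
  show "pattern_verts (map_edges \<phi> (uedges H)) (\<phi> (outa H)) (\<phi> (outb H)) \<subseteq> \<phi> ` {0..<nverts H}"
    using assms by (auto simp: admissible_def wf_ugraph_def pattern_verts_def uprod.set_map)
  show "\<phi> ` {0..<nverts H} \<subseteq> pattern_verts (map_edges \<phi> (uedges H)) (\<phi> (outa H)) (\<phi> (outb H))"
  proof
    fix y assume "y \<in> \<phi> ` {0..<nverts H}"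
    then obtain v where v: "v < nverts H" "y = \<phi> v" by auto
    show "y \<in> pattern_verts (map_edges \<phi> (uedges H)) (\<phi> (outa H)) (\<phi> (outb H))"
    proof (cases "v = outa H \<or> v = outb H")
      case True
      then show ?thesis using v by (auto simp: pattern_verts_def)
    next
      case False
      then obtain e where "e \<in># uedges H" "v \<in> set_uprod e"
        using assms v unfolding admissible_def by blast
      then show ?thesis using v by (force simp: pattern_verts_def uprod.set_map)
    qed
  qed
qed

lemma admissible_bounds:
  assumes "admissible n d H"
  shows "uedges H \<in> monomials n d" "outa H < n" "outb H < n"
  using assms by (fastforce simp: admissible_def wf_ugraph_def monomials_def pairs_below_def)+

lemma identity_graph_map:
  assumes "admissible n d H"
  shows "restrict id {0..<nverts H} \<in> graph_maps n H (outa H) (outb H)"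
    and "map_edges (restrict id {0..<nverts H}) (uedges H) = uedges H"
proof -
  show "restrict id {0..<nverts H} \<in> graph_maps n H (outa H) (outb H)"
    using assms by (auto simp: admissible_def wf_ugraph_def graph_maps_def)
  have "map_edges (restrict id {0..<nverts H}) (uedges H) = map_edges id (uedges H)"
    using assms by (intro map_edges_cong) (fastforce simp: admissible_def wf_ugraph_def)
  then show "map_edges (restrict id {0..<nverts H}) (uedges H) = uedges H"
    by (simp add: uprod.map_id0)
qed

lemma graph_coeff_self_nonzero:
  assumes "admissible n d H"
  shows "graph_coeff n H (uedges H) (outa H) (outb H) \<noteq> 0"
proof -
  have "restrict id {0..<nverts H} \<in>
      {\<phi> \<in> graph_maps n H (outa H) (outb H). map_edges \<phi> (uedges H) = uedges H}"
    using identity_graph_map[OF assms] by simp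
  then show ?thesis
    unfolding graph_coeff_def using finite_graph_maps by (auto simp: card_eq_0_iff)
qed

lemma graph_coeff_nonzero_imp_map:
  assumes "admissible n d H" "graph_coeff n H \<mu> i j \<noteq> 0"
  obtains \<phi> where "\<phi> \<in> graph_maps n H i j" "map_edges \<phi> (uedges H) = \<mu>"
    "pattern_verts \<mu> i j = \<phi> ` {0..<nverts H}"
proof -
  have "{\<phi> \<in> graph_maps n H i j. map_edges \<phi> (uedges H) = \<mu>} \<noteq> {}"
    using assms(2) unfolding graph_coeff_def by (metis card.empty of_nat_0)
  then obtain \<phi> where \<phi>: "\<phi> \<in> graph_maps n H i j" "map_edges \<phi> (uedges H) = \<mu>"
    by blast
  moreover have "pattern_verts \<mu> i j = \<phi> ` {0..<nverts H}"
    using pattern_verts_map_edges[OF assms(1), of \<phi>] \<phi> by (simp add: graph_maps_def)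
  ultimately show ?thesis ..
qed

lemma ugraph_iso_of_injective_maps:
  assumes adm1: "admissible n d H1" and adm2: "admissible n d H2"
    and \<phi>1: "\<phi>1 \<in> graph_maps n H1 i j" and \<phi>2: "\<phi>2 \<in> graph_maps n H2 i j"
    and inj1: "inj_on \<phi>1 {0..<nverts H1}" and inj2: "inj_on \<phi>2 {0..<nverts H2}"
    and edges: "map_edges \<phi>1 (uedges H1) = map_edges \<phi>2 (uedges H2)"
  shows "ugraph_iso H1 H2"
proof -
  let ?V1 = "{0..<nverts H1}" and ?V2 = "{0..<nverts H2}"
  have "\<phi>1 ` ?V1 = pattern_verts (map_edges \<phi>1 (uedges H1)) i j"
    using pattern_verts_map_edges[OF adm1, of \<phi>1] \<phi>1 by (simp add: graph_maps_def)
  also have "\<dots> = \<phi>2 ` ?V2"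
    using pattern_verts_map_edges[OF adm2, of \<phi>2] \<phi>2 edges by (simp add: graph_maps_def)
  finally have img: "\<phi>1 ` ?V1 = \<phi>2 ` ?V2" .
  then have same_size: "nverts H1 = nverts H2"
    using card_image[OF inj1] card_image[OF inj2] by fastforce
  define \<sigma> where "\<sigma> = inv_into ?V2 \<phi>2 \<circ> \<phi>1"
  have "bij_betw \<phi>1 ?V1 (\<phi>2 ` ?V2)"
    using inj1 img by (simp add: bij_betw_def)
  then have "bij_betw \<sigma> ?V1 ?V2"
    unfolding \<sigma>_def
    using bij_betw_inv_into[OF inj_on_imp_bij_betw[OF inj2]] by (rule bij_betw_trans)
  moreover have inv2: "inv_into ?V2 \<phi>2 (\<phi>2 x) = x" if "x < nverts H2" for x
    using inj2 that by (simp add: inv_into_f_f)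
  have "\<phi>1 (outa H1) = \<phi>2 (outa H2)" "\<phi>1 (outb H1) = \<phi>2 (outb H2)"
    using \<phi>1 \<phi>2 by (auto simp: graph_maps_def)
  then have "\<sigma> (outa H1) = outa H2" "\<sigma> (outb H1) = outb H2"
    using inv2 adm2 by (simp_all add: \<sigma>_def admissible_def wf_ugraph_def)
  moreover have "map_edges \<sigma> (uedges H1) = uedges H2"
  proof -
    have "map_edges \<sigma> (uedges H1) = map_edges (inv_into ?V2 \<phi>2 \<circ> \<phi>2) (uedges H2)"
      by (simp add: \<sigma>_def map_edges_comp[symmetric] edges)
    also have "\<dots> = map_edges id (uedges H2)"
      using adm2 inv2
      by (intro map_edges_cong) (auto simp: admissible_def dest: wf_ugraph_edge_vertex)
    finally show ?thesis by (simp add: uprod.map_id0)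
  qed
  ultimately show ?thesis
    unfolding ugraph_iso_def using same_size by auto
qed

lemma ugraph_iso_if_graph_coeff_nonzero:
  assumes adm: "admissible n d H" and adm': "admissible n d H'"
    and \<phi>': "\<phi>' \<in> graph_maps n H' i j" and inj': "inj_on \<phi>' {0..<nverts H'}"
    and edges': "map_edges \<phi>' (uedges H') = \<mu>"
    and nz: "graph_coeff n H \<mu> i j \<noteq> 0" and le: "nverts H \<le> nverts H'"
  shows "ugraph_iso H H'"
proof -
  obtain \<phi> where \<phi>: "\<phi> \<in> graph_maps n H i j" "map_edges \<phi> (uedges H) = \<mu>"
    and img: "pattern_verts \<mu> i j = \<phi> ` {0..<nverts H}"
    using graph_coeff_nonzero_imp_map[OF adm nz] by blast
  have "pattern_verts \<mu> i j = \<phi>' ` {0..<nverts H'}"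
    using pattern_verts_map_edges[OF adm', of \<phi>'] \<phi>' edges' by (simp add: graph_maps_def)
  then have "card (\<phi> ` {0..<nverts H}) = card {0..<nverts H}"
    using img card_image[OF inj'] card_image_le[of "{0..<nverts H}" \<phi>] le by simp
  then have "inj_on \<phi> {0..<nverts H}"
    by (rule eq_card_imp_inj_on[rotated]) simp
  then show ?thesis
    using ugraph_iso_of_injective_maps[OF adm adm' \<phi>(1) \<phi>' _ inj'] \<phi>(2) edges' by simp
qed

lemma inj_on_extends_to_permutation:
  assumes "finite N" "A \<subseteq> N" "inj_on f A" "f ` A \<subseteq> N"
  obtains g where "g permutes N" "\<And>x. x \<in> A \<Longrightarrow> g x = f x"
proof -
  have "card (N - A) = card (N - f ` A)"
    using assms by (simp add: card_Diff_subset card_image finite_subset)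
  then obtain h where h: "bij_betw h (N - A) (N - f ` A)"
    using finite_same_card_bij[of "N - A" "N - f ` A"] assms(1) by auto
  define g where "g x = (if x \<in> A then f x else if x \<in> N then h x else x)" for x
  have "bij_betw g A (f ` A)"
    using assms(3) by (simp add: bij_betw_def inj_on_def g_def image_def)
  moreover have "bij_betw g (N - A) (N - f ` A)"
    using h by (rule bij_betw_cong[THEN iffD1, rotated]) (auto simp: g_def)
  ultimately have "bij_betw g (A \<union> (N - A)) (f ` A \<union> (N - f ` A))"
    by (rule bij_betw_combine) auto
  moreover have "A \<union> (N - A) = N" "f ` A \<union> (N - f ` A) = N"
    using assms by auto
  ultimately have "g permutes N"
    by (intro bij_imp_permutes) (auto simp: g_def dest: subsetD[OF assms(2)])
  then show ?thesis
    using that by (auto simp: g_def)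
qed

lemma invariant_coeffs_at_injective_map:
  assumes inv: "invariant_coeffs n d \<kappa>" and adm: "admissible n d H"
    and \<phi>: "\<phi> \<in> graph_maps n H i j" and inj: "inj_on \<phi> {0..<nverts H}"
  shows "\<kappa> (map_edges \<phi> (uedges H)) i j = \<kappa> (uedges H) (outa H) (outb H)"
proof -
  have "{0..<nverts H} \<subseteq> {0..<n}" "\<phi> ` {0..<nverts H} \<subseteq> {0..<n}"
    using adm \<phi> by (auto simp: admissible_def graph_maps_def)
  then obtain g where g: "g permutes {0..<n}" and g\<phi>: "\<And>x. x < nverts H \<Longrightarrow> g x = \<phi> x"
    using inj_on_extends_to_permutation[OF _ _ inj]
    by (metis atLeastLessThan_iff finite_atLeastLessThan zero_le)
  have "map_edges g (uedges H) = map_edges \<phi> (uedges H)"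
    using adm g\<phi> by (intro map_edges_cong) (auto simp: admissible_def dest: wf_ugraph_edge_vertex)
  moreover have "g (outa H) = i" "g (outb H) = j"
    using adm \<phi> g\<phi> by (auto simp: admissible_def wf_ugraph_def graph_maps_def)
  ultimately show ?thesis
    using inv g admissible_bounds[OF adm] unfolding invariant_coeffs_def by metis
qed

lemma injective_graph_map_along_iso:
  assumes iso: "ugraph_iso G H" and wf: "wf_ugraph G"
    and \<phi>: "\<phi> \<in> graph_maps n G i j" and inj: "inj_on \<phi> {0..<nverts G}"
  obtains \<psi> where "\<psi> \<in> graph_maps n H i j" "inj_on \<psi> {0..<nverts H}"
    "map_edges \<psi> (uedges H) = map_edges \<phi> (uedges G)"
proof -
  let ?V = "{0..<nverts G}"
  obtain \<sigma> where \<sigma>: "bij_betw \<sigma> ?V {0..<nverts H}"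
    and edges: "map_edges \<sigma> (uedges G) = uedges H"
    and outs: "\<sigma> (outa G) = outa H" "\<sigma> (outb G) = outb H"
    using iso unfolding ugraph_iso_def by blast
  have same_size: "nverts H = nverts G"
    using iso by (simp add: ugraph_iso_def)
  note \<sigma> = \<sigma>[unfolded same_size]
  define \<psi> where "\<psi> = restrict (\<phi> \<circ> inv_into ?V \<sigma>) ?V"
  have \<sigma>_inv: "inv_into ?V \<sigma> (\<sigma> x) = x" if "x \<in> ?V" for x
    using \<sigma> that by (simp add: bij_betw_def inv_into_f_f)
  have \<sigma>': "bij_betw (inv_into ?V \<sigma>) ?V ?V"
    by (rule bij_betw_inv_into[OF \<sigma>])
  have outs_V: "outa G \<in> ?V" "outb G \<in> ?V"
    using wf by (auto simp: wf_ugraph_def)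
  have "\<psi> \<in> ?V \<rightarrow>\<^sub>E {0..<n}"
    using \<phi> bij_betw_apply[OF \<sigma>'] by (auto simp: \<psi>_def graph_maps_def PiE_iff)
  moreover have "\<psi> (outa H) = i" "\<psi> (outb H) = j"
    unfolding outs[symmetric] using \<phi> outs_V bij_betw_apply[OF \<sigma>] \<sigma>_inv
    by (auto simp: \<psi>_def graph_maps_def)
  ultimately have "\<psi> \<in> graph_maps n H i j"
    by (simp add: graph_maps_def same_size)
  moreover have "inj_on (\<phi> \<circ> inv_into ?V \<sigma>) ?V"
    using inj \<sigma>' by (simp add: bij_betw_def comp_inj_on)
  then have "inj_on \<psi> {0..<nverts H}"
    by (simp add: \<psi>_def same_size inj_on_def)
  moreover have "map_edges \<psi> (uedges H) = map_edges \<phi> (uedges G)"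
  proof -
    have "map_edges \<psi> (uedges H) = map_edges (\<psi> \<circ> \<sigma>) (uedges G)"
      by (simp add: edges[symmetric] map_edges_comp)
    also have "\<dots> = map_edges \<phi> (uedges G)"
      using \<sigma> \<sigma>_inv wf_ugraph_edge_vertex[OF wf]
      by (intro map_edges_cong) (auto simp: \<psi>_def bij_betw_def)
    finally show ?thesis .
  qed
  ultimately show ?thesis ..
qed

lemma pattern_graph_exists:
  assumes \<mu>: "\<mu> \<in> monomials n d" and ij: "i < n" "j < n"
  obtains G \<phi> where "admissible n d G" "\<phi> \<in> graph_maps n G i j" "inj_on \<phi> {0..<nverts G}"
    "map_edges \<phi> (uedges G) = \<mu>"
proof -
  define S where "S = pattern_verts \<mu> i j"
  define k where "k = card S"
  obtain \<beta> where \<beta>: "bij_betw \<beta> {0..<k} S"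
    using ex_bij_betw_nat_finite[OF finite_pattern_verts] unfolding k_def S_def by blast
  define \<beta>' where "\<beta>' = inv_into {0..<k} \<beta>"
  have \<beta>'_S: "\<beta>' x < k" "\<beta> (\<beta>' x) = x" if "x \<in> S" for x
    using \<beta> that bij_betw_apply[OF bij_betw_inv_into[OF \<beta>]]
    by (auto simp: \<beta>'_def bij_betw_inv_into_right)
  have \<beta>_k: "\<beta> v \<in> S" "\<beta>' (\<beta> v) = v" if "v < k" for v
    using \<beta> that by (auto simp: \<beta>'_def bij_betw_def inv_into_f_f)
  have edge_S: "x \<in> S" if "e \<in># \<mu>" "x \<in> set_uprod e" for e x
    using that by (auto simp: S_def pattern_verts_def)
  have ij_S: "i \<in> S" "j \<in> S"
    by (auto simp: S_def pattern_verts_def)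
  have S_n: "S \<subseteq> {0..<n}"
    unfolding S_def using pattern_verts_subset[OF \<mu> ij] .
  define G where "G = UG k (map_edges \<beta>' \<mu>) (\<beta>' i) (\<beta>' j)"
  define \<phi> where "\<phi> = restrict \<beta> {0..<k}"
  have "admissible n d G"
    unfolding admissible_def
  proof (intro conjI allI impI)
    show "wf_ugraph G"
      using \<beta>'_S ij_S edge_S by (auto simp: wf_ugraph_def G_def uprod.set_map)
    have "k \<le> n"
      unfolding k_def using card_mono[OF _ S_n] by simp
    moreover have "k \<le> 2 + 2 * d"
      using card_pattern_verts_le[of \<mu> i j] \<mu> unfolding k_def S_def monomials_def by simp
    ultimately show "nverts G \<le> min n (2 + 2 * d)"
      by (simp add: G_def)
    show "size (uedges G) \<le> d"
      using \<mu> by (simp add: G_def monomials_def)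
  next
    fix v assume "v < nverts G" "v \<noteq> outa G \<and> v \<noteq> outb G"
    then have v: "v < k" "v \<noteq> \<beta>' i" "v \<noteq> \<beta>' j"
      by (auto simp: G_def)
    then have "\<beta> v \<noteq> i" "\<beta> v \<noteq> j"
      using \<beta>_k by auto
    then obtain e where e: "e \<in># \<mu>" "\<beta> v \<in> set_uprod e"
      using \<beta>_k(1)[OF v(1)] by (auto simp: S_def pattern_verts_def)
    then have "v \<in> set_uprod (map_uprod \<beta>' e)"
      using \<beta>_k(2)[OF v(1)] by (force simp: uprod.set_map)
    then show "\<exists>e\<in>#uedges G. v \<in> set_uprod e"
      using e(1) by (auto simp: G_def)
  qed
  moreover have "\<phi> \<in> graph_maps n G i j"
    using \<beta>_k \<beta>'_S ij_S S_n by (fastforce simp: graph_maps_def G_def \<phi>_def PiE_iff)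
  moreover have "inj_on \<phi> {0..<nverts G}"
    using bij_betw_imp_inj_on[OF \<beta>] by (simp add: G_def \<phi>_def inj_on_def)
  moreover have "map_edges \<phi> (uedges G) = \<mu>"
  proof -
    have "map_edges \<phi> (uedges G) = map_edges (\<phi> \<circ> \<beta>') \<mu>"
      by (simp add: G_def map_edges_comp)
    also have "\<dots> = map_edges id \<mu>"
      using \<beta>'_S edge_S by (intro map_edges_cong) (auto simp: \<phi>_def)
    finally show ?thesis by (simp add: uprod.map_id0)
  qed
  ultimately show ?thesis ..
qed

lemma finite_admissible: "finite {H. admissible n d H}"
proof (rule finite_subset)
  show "{H. admissible n d H} \<subseteq>
      (\<lambda>(m, E, a, b). UG m E a b) ` ({0..n} \<times> monomials n d \<times> {0..<n} \<times> {0..<n})"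
  proof
    fix H assume "H \<in> {H. admissible n d H}"
    then have adm: "admissible n d H" by simp
    then have "(nverts H, uedges H, outa H, outb H) \<in> {0..n} \<times> monomials n d \<times> {0..<n} \<times> {0..<n}"
      using admissible_bounds[OF adm] by (simp add: admissible_def)
    moreover have "H = (\<lambda>(m, E, a, b). UG m E a b) (nverts H, uedges H, outa H, outb H)"
      by (cases H) simp
    ultimately show "H \<in> (\<lambda>(m, E, a, b). UG m E a b) ` ({0..n} \<times> monomials n d \<times> {0..<n} \<times> {0..<n})"
      by blast
  qed
qed (simp add: finite_monomials)

lemma P_graph_sum_eq_poly_map:
  assumes "\<forall>H\<in>R. admissible n d H" "X \<in> sym_mats n"
  shows "(\<Sum>H\<in>R. c H * P_graph n H X i j) =
    poly_map n d (\<lambda>\<mu> i j. \<Sum>H\<in>R. c H * graph_coeff n H \<mu> i j) X i j"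
  unfolding poly_map_sum using assms
  by (intro sum.cong) (auto simp: admissible_def P_graph_eq_poly_map)

lemma card_pattern_verts_le_nverts:
  assumes "admissible n d H" "graph_coeff n H \<mu> i j \<noteq> 0"
  shows "card (pattern_verts \<mu> i j) \<le> nverts H"
proof -
  obtain \<phi> where "pattern_verts \<mu> i j = \<phi> ` {0..<nverts H}"
    using graph_coeff_nonzero_imp_map[OF assms] by blast
  then show ?thesis
    using card_image_le[of "{0..<nverts H}" \<phi>] by simp
qed

lemma pattern_realized:
  assumes RI: "\<forall>H. admissible n d H \<longrightarrow> (\<exists>H'\<in>R. ugraph_iso H H')"
    and \<mu>: "\<mu> \<in> monomials n d" and ij: "i < n" "j < n"
  obtains H \<phi> where "H \<in> R" "\<phi> \<in> graph_maps n H i j" "inj_on \<phi> {0..<nverts H}"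
    "map_edges \<phi> (uedges H) = \<mu>"
proof -
  obtain G \<phi> where G: "admissible n d G" and \<phi>: "\<phi> \<in> graph_maps n G i j"
    "inj_on \<phi> {0..<nverts G}" "map_edges \<phi> (uedges G) = \<mu>"
    using pattern_graph_exists[OF \<mu> ij] .
  obtain H where "H \<in> R" "ugraph_iso G H"
    using RI G by blast
  moreover obtain \<psi> where "\<psi> \<in> graph_maps n H i j" "inj_on \<psi> {0..<nverts H}"
    "map_edges \<psi> (uedges H) = \<mu>"
    using injective_graph_map_along_iso[OF \<open>ugraph_iso G H\<close> _ \<phi>(1,2)] G \<phi>(3)
    by (auto simp: admissible_def)
  ultimately show ?thesis
    using that by blast
qed

text \<open>A nontrivial relation is detected at the own pattern of a graph with the most vertices among
  those with nonzero coefficient.\<close>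

lemma P_graph_linear_independent:
  assumes RA: "\<forall>H\<in>R. admissible n d H" and RU: "\<forall>H1\<in>R. \<forall>H2\<in>R. ugraph_iso H1 H2 \<longrightarrow> H1 = H2"
    and fR: "finite R"
    and zero: "\<forall>X\<in>sym_mats n. \<forall>i<n. \<forall>j<n. (\<Sum>H\<in>R. c H * P_graph n H X i j) = 0"
  shows "\<forall>H\<in>R. c H = 0"
proof (rule ccontr)
  assume "\<not> (\<forall>H\<in>R. c H = 0)"
  moreover have "nverts H < Suc n" if "H \<in> R" for H
    using RA that by (auto simp: admissible_def)
  ultimately obtain H0 where H0: "H0 \<in> R" "c H0 \<noteq> 0"
    and top: "\<And>H. H \<in> R \<Longrightarrow> c H \<noteq> 0 \<Longrightarrow> nverts H \<le> nverts H0"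
    using ex_has_greatest_nat[of "\<lambda>H. H \<in> R \<and> c H \<noteq> 0" _ nverts "Suc n"] by blast
  have adm0: "admissible n d H0"
    using RA H0 by blast
  let ?\<mu> = "uedges H0" and ?a = "outa H0" and ?b = "outb H0"
  have "\<forall>X\<in>sym_mats n. poly_map n d (\<lambda>\<mu> i j. \<Sum>H\<in>R. c H * graph_coeff n H \<mu> i j) X ?a ?b =
      poly_map n d (\<lambda>_ _ _. 0) X ?a ?b"
    using zero admissible_bounds[OF adm0] P_graph_sum_eq_poly_map[OF RA]
    by (simp add: poly_map_def)
  then have sum0: "(\<Sum>H\<in>R. c H * graph_coeff n H ?\<mu> ?a ?b) = 0"
    using poly_map_coeff_unique admissible_bounds[OF adm0] by fastforce
  have others: "c H * graph_coeff n H ?\<mu> ?a ?b = 0" if "H \<in> R" "H \<noteq> H0" for H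
  proof (rule ccontr)
    assume nz: "c H * graph_coeff n H ?\<mu> ?a ?b \<noteq> 0"
    have "ugraph_iso H H0"
      using ugraph_iso_if_graph_coeff_nonzero[OF _ adm0 identity_graph_map(1)[OF adm0]
          _ identity_graph_map(2)[OF adm0]] RA that nz top[OF that(1)]
      by (auto simp: inj_on_def)
    then show False
      using RU that H0(1) by blast
  qed
  have "(\<Sum>H\<in>R. c H * graph_coeff n H ?\<mu> ?a ?b) = (\<Sum>H\<in>{H0}. c H * graph_coeff n H ?\<mu> ?a ?b)"
    using fR H0(1) others by (intro sum.mono_neutral_right) auto
  then show False
    using sum0 H0(2) graph_coeff_self_nonzero[OF adm0] by simp
qed

lemma invariant_coeffs_diff_sum:
  assumes "invariant_coeffs n d \<kappa>" "\<forall>h\<in>A. invariant_coeffs n d (\<kappa>s h)"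
  shows "invariant_coeffs n d (\<lambda>\<mu> i j. \<kappa> \<mu> i j - (\<Sum>h\<in>A. r h * \<kappa>s h \<mu> i j))"
  using assms unfolding invariant_coeffs_def by simp

text \<open>On a pattern with \<open>m\<close> vertices, the graphs of \<open>R\<close> with \<open>m\<close> vertices all have zero coefficient
  except the representative of the pattern's own isomorphism class.\<close>

lemma top_layer_expansion:
  assumes RA: "\<forall>H\<in>R. admissible n d H" and RI: "\<forall>H. admissible n d H \<longrightarrow> (\<exists>H'\<in>R. ugraph_iso H H')"
    and RU: "\<forall>H1\<in>R. \<forall>H2\<in>R. ugraph_iso H1 H2 \<longrightarrow> H1 = H2" and fR: "finite R"
    and inv: "invariant_coeffs n d \<kappa>" and \<mu>: "\<mu> \<in> monomials n d" and ij: "i < n" "j < n"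
  shows "(\<Sum>H\<in>{H\<in>R. nverts H = card (pattern_verts \<mu> i j)}.
      \<kappa> (uedges H) (outa H) (outb H) / graph_coeff n H (uedges H) (outa H) (outb H) *
      graph_coeff n H \<mu> i j)
    = \<kappa> \<mu> i j"
proof -
  let ?L = "{H\<in>R. nverts H = card (pattern_verts \<mu> i j)}"
  let ?r = "\<lambda>H. \<kappa> (uedges H) (outa H) (outb H) / graph_coeff n H (uedges H) (outa H) (outb H)"
  obtain H1 \<phi>1 where H1: "H1 \<in> R" "\<phi>1 \<in> graph_maps n H1 i j" "inj_on \<phi>1 {0..<nverts H1}"
    "map_edges \<phi>1 (uedges H1) = \<mu>"
    using pattern_realized[OF RI \<mu> ij] .
  have adm1: "admissible n d H1"
    using RA H1(1) by blast
  have size1: "nverts H1 = card (pattern_verts \<mu> i j)"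
    using pattern_verts_map_edges[OF adm1, of \<phi>1] H1 card_image[OF H1(3)]
    by (simp add: graph_maps_def)
  have others: "?r H * graph_coeff n H \<mu> i j = 0" if "H \<in> ?L" "H \<noteq> H1" for H
  proof (rule ccontr)
    assume "?r H * graph_coeff n H \<mu> i j \<noteq> 0"
    then have "ugraph_iso H H1"
      using ugraph_iso_if_graph_coeff_nonzero[OF _ adm1 H1(2-4)] RA that size1 by auto
    then show False
      using RU that H1(1) by auto
  qed
  have "(\<Sum>H\<in>?L. ?r H * graph_coeff n H \<mu> i j) = (\<Sum>H\<in>{H1}. ?r H * graph_coeff n H \<mu> i j)"
    using fR H1(1) size1 others by (intro sum.mono_neutral_right) auto
  also have "\<dots> = \<kappa> \<mu> i j"
    using invariant_coeffs_at_injective_map[OF inv adm1 H1(2,3)]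
      invariant_coeffs_at_injective_map[OF graph_coeff_invariant adm1 H1(2,3)]
      graph_coeff_self_nonzero[OF adm1] H1(4) adm1
    by (simp add: admissible_def)
  finally show ?thesis .
qed

text \<open>Induction on a bound \<open>k\<close> for the size of the patterns on which \<open>\<kappa>\<close> may be nonzero: subtracting
  the layer of graphs with \<open>k + 1\<close> vertices kills \<open>\<kappa>\<close> on patterns of that size and cannot create
  nonzero values on larger patterns.\<close>

lemma invariant_coeffs_graph_expansion:
  assumes RA: "\<forall>H\<in>R. admissible n d H" and RI: "\<forall>H. admissible n d H \<longrightarrow> (\<exists>H'\<in>R. ugraph_iso H H')"
    and RU: "\<forall>H1\<in>R. \<forall>H2\<in>R. ugraph_iso H1 H2 \<longrightarrow> H1 = H2" and fR: "finite R"
  shows "invariant_coeffs n d \<kappa> \<Longrightarrow>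
    \<forall>\<mu>\<in>monomials n d. \<forall>i<n. \<forall>j<n. k < card (pattern_verts \<mu> i j) \<longrightarrow> \<kappa> \<mu> i j = 0 \<Longrightarrow>
    \<exists>c. \<forall>\<mu>\<in>monomials n d. \<forall>i<n. \<forall>j<n. \<kappa> \<mu> i j = (\<Sum>H\<in>R. c H * graph_coeff n H \<mu> i j)"
proof (induction k arbitrary: \<kappa>)
  case 0
  have "0 < card (pattern_verts \<mu> i j)" for \<mu> i j
    using finite_pattern_verts by (auto simp: card_gt_0_iff pattern_verts_def)
  then show ?case
    using "0.prems"(2) by (intro exI[of _ "\<lambda>_. 0"]) simp
next
  case (Suc k)
  define L where "L = {H\<in>R. nverts H = Suc k}"
  define r where "r H = \<kappa> (uedges H) (outa H) (outb H) / graph_coeff n H (uedges H) (outa H) (outb H)"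
    for H
  define \<kappa>' where "\<kappa>' \<mu> i j = \<kappa> \<mu> i j - (\<Sum>H\<in>L. r H * graph_coeff n H \<mu> i j)" for \<mu> i j
  have "invariant_coeffs n d \<kappa>'"
    unfolding \<kappa>'_def using Suc.prems(1) RA graph_coeff_invariant
    by (intro invariant_coeffs_diff_sum) (auto simp: L_def admissible_def)
  moreover have "\<forall>\<mu>\<in>monomials n d. \<forall>i<n. \<forall>j<n. k < card (pattern_verts \<mu> i j) \<longrightarrow> \<kappa>' \<mu> i j = 0"
  proof (intro ballI allI impI)
    fix \<mu> i j
    assume \<mu>: "\<mu> \<in> monomials n d" and ij: "i < n" "j < n" and k: "k < card (pattern_verts \<mu> i j)"
    show "\<kappa>' \<mu> i j = 0"
    proof (cases "card (pattern_verts \<mu> i j) = Suc k")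
      case True
      then show ?thesis
        using top_layer_expansion[OF RA RI RU fR Suc.prems(1) \<mu> ij]
        by (simp add: \<kappa>'_def L_def r_def)
    next
      case False
      then have "\<kappa> \<mu> i j = 0"
        using Suc.prems(2) \<mu> ij k by auto
      moreover have "graph_coeff n H \<mu> i j = 0" if "H \<in> L" for H
        using card_pattern_verts_le_nverts[of n d H \<mu> i j] RA that k False by (auto simp: L_def)
      ultimately show ?thesis
        by (simp add: \<kappa>'_def)
    qed
  qed
  ultimately obtain c
    where c: "\<forall>\<mu>\<in>monomials n d. \<forall>i<n. \<forall>j<n. \<kappa>' \<mu> i j = (\<Sum>H\<in>R. c H * graph_coeff n H \<mu> i j)"
    using Suc.IH by blast
  have "(\<Sum>H\<in>L. r H * graph_coeff n H \<mu> i j) =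
      (\<Sum>H\<in>R. (if H \<in> L then r H else 0) * graph_coeff n H \<mu> i j)"
    for \<mu> i j
    unfolding L_def using fR
    by (simp add: sum.inter_filter[symmetric] if_distrib[of "\<lambda>x. x * _"] cong: if_cong)
  then show ?case
    using c by (intro exI[of _ "\<lambda>H. c H + (if H \<in> L then r H else 0)"])
      (simp add: \<kappa>'_def distrib_right sum.distrib diff_eq_eq)
qed

lemma equiv_poly_map_in_span:
  assumes RA: "\<forall>H\<in>R. admissible n d H" and RI: "\<forall>H. admissible n d H \<longrightarrow> (\<exists>H'\<in>R. ugraph_iso H H')"
    and RU: "\<forall>H1\<in>R. \<forall>H2\<in>R. ugraph_iso H1 H2 \<longrightarrow> H1 = H2" and fR: "finite R"
    and P: "equiv_poly_map n d P"
  shows "\<exists>c. \<forall>X\<in>sym_mats n. \<forall>i<n. \<forall>j<n. P X i j = (\<Sum>H\<in>R. c H * P_graph n H X i j)"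
proof -
  have "\<exists>c. \<forall>X\<in>sym_mats n. P X i j = (\<Sum>\<mu>\<in>monomials n d. c \<mu> * edge_monomial \<mu> X)"
    if "i < n" "j < n" for i j
  proof -
    have "poly_fun_deg n d (\<lambda>X. P X i j)"
      using P that by (simp add: equiv_poly_map_def)
    then obtain c where "\<forall>X\<in>sym_mats n. P X i j = (\<Sum>\<mu>\<in>monomials n d. c \<mu> * edge_monomial \<mu> X)"
      by (rule poly_fun_deg_imp_edge_monomials)
    then show ?thesis by blast
  qed
  then obtain \<kappa>0 where \<kappa>0: "\<And>i j. i < n \<Longrightarrow> j < n \<Longrightarrow>
      \<forall>X\<in>sym_mats n. P X i j = (\<Sum>\<mu>\<in>monomials n d. \<kappa>0 i j \<mu> * edge_monomial \<mu> X)"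
    by metis
  define \<kappa> where "\<kappa> \<mu> i j = \<kappa>0 i j \<mu>" for \<mu> i j
  have P\<kappa>: "\<forall>X\<in>sym_mats n. \<forall>i<n. \<forall>j<n. P X i j = poly_map n d \<kappa> X i j"
    using \<kappa>0 by (simp add: poly_map_def \<kappa>_def)
  then have "invariant_coeffs n d \<kappa>"
    using P equivariant_cong[OF P\<kappa>] equivariant_poly_map_iff by (simp add: equiv_poly_map_def)
  moreover have "\<forall>\<mu>\<in>monomials n d. \<forall>i<n. \<forall>j<n. n < card (pattern_verts \<mu> i j) \<longrightarrow> \<kappa> \<mu> i j = 0"
    using card_mono[OF _ pattern_verts_subset] by fastforce
  ultimately obtain c
    where c: "\<forall>\<mu>\<in>monomials n d. \<forall>i<n. \<forall>j<n. \<kappa> \<mu> i j = (\<Sum>H\<in>R. c H * graph_coeff n H \<mu> i j)"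
    using invariant_coeffs_graph_expansion[OF RA RI RU fR] by blast
  have "P X i j = (\<Sum>H\<in>R. c H * P_graph n H X i j)" if "X \<in> sym_mats n" "i < n" "j < n" for X i j
  proof -
    have "P X i j = poly_map n d (\<lambda>\<mu> i j. \<Sum>H\<in>R. c H * graph_coeff n H \<mu> i j) X i j"
      using P\<kappa> c that by (auto simp: poly_map_def intro!: sum.cong)
    then show ?thesis
      using P_graph_sum_eq_poly_map[OF RA that(1)] by simp
  qed
  then show ?thesis by blast
qed

theorem mainTheorem3:
  fixes n d :: nat and R :: "ugraph set"
  assumes "n \<ge> 1"
    and "\<forall>H\<in>R. admissible n d H"
    and "\<forall>H. admissible n d H \<longrightarrow> (\<exists>H'\<in>R. ugraph_iso H H')"
    and "\<forall>H1\<in>R. \<forall>H2\<in>R. ugraph_iso H1 H2 \<longrightarrow> H1 = H2"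
  shows "is_basis_of n (equiv_poly_map n d) R (P_graph n)"
proof -
  have fR: "finite R"
    using finite_subset[OF _ finite_admissible] assms(2) by blast
  have "\<forall>H\<in>R. equiv_poly_map n d (P_graph n H)"
    using assms(2) P_graph_equiv_poly_map by (auto simp: admissible_def)
  then show ?thesis
    unfolding is_basis_of_def
    using fR P_graph_linear_independent[OF assms(2,4) fR] equiv_poly_map_in_span[OF assms(2-4) fR]
    by blast
qed

end
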